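(* Let $G=(V,E)$ be a connected graph on $n\geq 4$ vertices with $V=\{p_1,\ldots,p_{n-1},q\}$, where $p_1-p_2-\cdots-p_{n-1}$ is a path in $G$, and let $N(q)=\{p_{i_1},\ldots,p_{i_t}\}$. If $\psi_{n-1}(G)=2$ and $\psi_n(G)=0$, then: (1) $d(p_1)\geq 2$ and $d(p_{n-1})\geq 2$; (2) $p_1p_{n-1}\notin E$, $qp_1\notin E$, $qp_{n-1}\notin E$, and for all $i\in\{2,\ldots,n-2\}$, if $qp_i\in E$ then $qp_{i+1}\notin E$; (3) $p_1p_{i_j+1}\notin E$ and $p_{n-1}p_{i_j-1}\notin E$ for all $j\in\{1,\ldots,t\}$; (4) $p_1p_{i_j-1}\notin E$ for all $j$ with $i_j>\min\{i_1,\ldots,i_t\}$, and $p_{n-1}p_{i_j+1}\notin E$ for all $j$ with $i_j<\max\{i_1,\ldots,i_t\}$.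
   Context: All graphs are finite and simple. For a graph $G$ and a positive integer $k$, a $k$-path vertex cover ($k$-PVC) of $G$ is a set $S$ of vertices such that every path on $k$ vertices in $G$ contains at least one vertex of $S$ (if $G$ has no path on $k$ vertices, the empty set is a $k$-PVC). $\psi_k(G)$ denotes the minimum cardinality of a $k$-PVC of $G$. $N(v)$ is the neighbourhood and $d(v)$ the degree of a vertex $v$. *)

theory Defs
  imports Main
begin

definition simple_graph :: "'a set \<Rightarrow> ('a \<Rightarrow> 'a \<Rightarrow> bool) \<Rightarrow> bool" where
  "simple_graph V E \<longleftrightarrow> finite V \<and>
     (\<forall>x y. E x y \<longrightarrow> x \<in> V \<and> y \<in> V \<and> x \<noteq> y \<and> E y x)"

definition connected_graph :: "'a set \<Rightarrow> ('a \<Rightarrow> 'a \<Rightarrow> bool) \<Rightarrow> bool" where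
  "connected_graph V E \<longleftrightarrow>
     (\<forall>u\<in>V. \<forall>v\<in>V. (\<lambda>x y. E x y \<and> x \<in> V \<and> y \<in> V)\<^sup>*\<^sup>* u v)"

definition is_path :: "'a set \<Rightarrow> ('a \<Rightarrow> 'a \<Rightarrow> bool) \<Rightarrow> nat \<Rightarrow> 'a list \<Rightarrow> bool" where
  "is_path V E k xs \<longleftrightarrow> length xs = k \<and> distinct xs \<and> set xs \<subseteq> V \<and>
     (\<forall>i. Suc i < length xs \<longrightarrow> E (xs ! i) (xs ! Suc i))"

definition is_kpvc :: "'a set \<Rightarrow> ('a \<Rightarrow> 'a \<Rightarrow> bool) \<Rightarrow> nat \<Rightarrow> 'a set \<Rightarrow> bool" where
  "is_kpvc V E k S \<longleftrightarrow> S \<subseteq> V \<and> (\<forall>xs. is_path V E k xs \<longrightarrow> set xs \<inter> S \<noteq> {})"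

definition psi :: "'a set \<Rightarrow> ('a \<Rightarrow> 'a \<Rightarrow> bool) \<Rightarrow> nat \<Rightarrow> nat" where
  "psi V E k = Min (card ` {S. is_kpvc V E k S})"

definition degree :: "'a set \<Rightarrow> ('a \<Rightarrow> 'a \<Rightarrow> bool) \<Rightarrow> 'a \<Rightarrow> nat" where
  "degree V E v = card {u \<in> V. E v u}"

end

(* Since psi_n(G) = 0, G has no path through all n vertices. Each non-adjacency is proved by
   showing that the forbidden edge would splice q and the segments of the path p_1 ... p_(n-1)
   into such a Hamiltonian path. For the degrees: psi_(n-1)(G) = 2 means that no single vertex
   meets every path on n - 1 vertices, so for an edge vw some such path avoids w; it then passes
   through every other vertex, in particular v, which therefore has a second neighbour on it. *)

theory Submission imports Defs begin

lemma is_path_iff_successively: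
  "is_path V E k xs \<longleftrightarrow> length xs = k \<and> distinct xs \<and> set xs \<subseteq> V \<and> successively E xs"
  unfolding is_path_def successively_conv_nth by blast

lemma spanning_walk_is_path:
  assumes "successively E xs" "set xs = V" "length xs = card V"
  shows "is_path V E (card V) xs"
  using assms card_distinct[of xs] by (simp add: is_path_iff_successively)

lemma successively_map_upt:
  assumes "\<And>i. a \<le> i \<Longrightarrow> Suc i < b \<Longrightarrow> E (p i) (p (Suc i))"
  shows "successively E (map p [a..<b])"
  using assms by (auto simp: successively_conv_nth)

lemma successively_rev_symmetric:
  assumes "\<And>x y. E x y \<Longrightarrow> E y x"
  shows "successively E (rev xs) \<longleftrightarrow> successively E xs"
  using assms by (auto intro: successively_mono)

lemma hd_map_upt [simp]: "a < b \<Longrightarrow> hd (map p [a..<b]) = p a"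
  by (simp add: hd_map)

lemma last_map_upt [simp]: "a < b \<Longrightarrow> last (map p [a..<b]) = p (b - 1)"
  by (simp add: last_map)

lemma finite_kpvc_cards: "finite V \<Longrightarrow> finite (card ` {S. is_kpvc V E k S})"
  by (rule finite_imageI, rule finite_subset[of _ "Pow V"]) (auto simp: is_kpvc_def)

lemma is_kpvc_whole: "1 \<le> k \<Longrightarrow> is_kpvc V E k V"
  unfolding is_kpvc_def is_path_def by (auto simp: Suc_le_eq Int_absorb2)

lemma psi_eq_0_imp_no_path:
  assumes "finite V" "1 \<le> k" "psi V E k = 0"
  shows "\<not> is_path V E k xs"
proof
  assume path: "is_path V E k xs"
  have "psi V E k \<in> card ` {S. is_kpvc V E k S}"
    unfolding psi_def using is_kpvc_whole[OF assms(2)] finite_kpvc_cards[OF assms(1)]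
    by (intro Min_in) auto
  then obtain S where "is_kpvc V E k S" "card S = 0"
    using assms(3) by auto
  moreover from this have "S = {}"
    using assms(1) by (auto simp: is_kpvc_def dest: finite_subset)
  ultimately show False
    using path by (auto simp: is_kpvc_def)
qed

lemma psi_ge_2_imp_avoiding_path:
  assumes "finite V" "2 \<le> psi V E k" "v \<in> V"
  shows "\<exists>xs. is_path V E k xs \<and> v \<notin> set xs"
proof (rule ccontr)
  assume "\<nexists>xs. is_path V E k xs \<and> v \<notin> set xs"
  then have "is_kpvc V E k {v}"
    using assms(3) by (auto simp: is_kpvc_def)
  then have "psi V E k \<le> card {v}"
    unfolding psi_def using finite_kpvc_cards[OF assms(1)] by (intro Min_le) blast+
  with assms(2) show False by simp
qed

lemma connected_graph_has_neighbour:
  assumes "connected_graph V E" "u \<in> V" "v \<in> V" "u \<noteq> v"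
  shows "\<exists>w\<in>V. E u w"
proof -
  have "(\<lambda>x y. E x y \<and> x \<in> V \<and> y \<in> V)\<^sup>*\<^sup>* u v"
    using assms(1-3) unfolding connected_graph_def by blast
  then show ?thesis
    using assms(4) by (cases rule: converse_rtranclpE) auto
qed

lemma path_avoiding_one_vertex_covers_rest:
  assumes "finite V" "card V = Suc k" "is_path V E k xs" "w \<in> V" "w \<notin> set xs"
  shows "set xs = V - {w}"
proof (rule card_subset_eq)
  show "set xs \<subseteq> V - {w}" "finite (V - {w})"
    using assms by (auto simp: is_path_def)
  show "card (set xs) = card (V - {w})"
    using assms by (simp add: is_path_def distinct_card)
qed

lemma path_vertex_has_neighbour_on_path:
  assumes "simple_graph V E" "is_path V E k xs" "2 \<le> k" "v \<in> set xs"
  shows "\<exists>u\<in>set xs. E v u"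
proof -
  obtain i where i: "i < k" "xs ! i = v"
    using assms(2,4) by (auto simp: is_path_def in_set_conv_nth)
  have path: "length xs = k" "successively E xs"
    using assms(2) by (auto simp: is_path_iff_successively)
  show ?thesis
  proof (cases "Suc i < k")
    case True
    then show ?thesis
      using i path by (metis nth_mem successively_nth)
  next
    case False
    then have "E (xs ! (i - 1)) v" "i - 1 < k"
      using i path assms(3) successively_nth[of E xs "i - 1"] by auto
    then show ?thesis
      using assms(1) path(1) unfolding simple_graph_def by (metis nth_mem)
  qed
qed

lemma degree_ge_2_if_avoiding_paths:
  assumes "simple_graph V E" "card V = Suc k" "2 \<le> k"
    and avoid: "\<And>w. w \<in> V \<Longrightarrow> \<exists>xs. is_path V E k xs \<and> w \<notin> set xs"
    and "E v w"
  shows "2 \<le> degree V E v"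
proof -
  have fin: "finite V" and vw: "v \<in> V" "w \<in> V" "v \<noteq> w"
    using assms(1,5) by (auto simp: simple_graph_def)
  obtain xs where xs: "is_path V E k xs" "w \<notin> set xs"
    using avoid[OF vw(2)] by blast
  then have "v \<in> set xs"
    using path_avoiding_one_vertex_covers_rest[OF fin assms(2) xs(1) vw(2)] vw by blast
  then obtain u where u: "u \<in> set xs" "E v u"
    using path_vertex_has_neighbour_on_path[OF assms(1) xs(1) assms(3)] by blast
  have "{u, w} \<subseteq> {x \<in> V. E v x}"
    using u xs(1) vw assms(5) by (auto simp: is_path_def)
  then have "card {u, w} \<le> degree V E v"
    unfolding degree_def using fin by (intro card_mono) auto
  moreover have "u \<noteq> w"
    using u xs(2) by blast
  ultimately show ?thesis
    by simp
qed

locale nontraceable_path_plus_vertex =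
  fixes V :: "'a set" and E :: "'a \<Rightarrow> 'a \<Rightarrow> bool" and p :: "nat \<Rightarrow> 'a" and q :: 'a
    and m :: nat
  assumes simple: "simple_graph V E"
    and vertices: "V = p ` {1..m} \<union> {q}"
    and card_vertices: "card V = Suc m"
    and path_edge: "\<And>i. 1 \<le> i \<Longrightarrow> i < m \<Longrightarrow> E (p i) (p (Suc i))"
    and no_spanning_path: "\<not> is_path V E (Suc m) xs"
begin

lemma edge_sym: "E x y \<Longrightarrow> E y x"
  using simple by (simp add: simple_graph_def)

lemma no_spanning_walk:
  assumes "successively E xs" "set xs = V" "length xs = Suc m"
  shows False
  using spanning_walk_is_path[OF assms(1,2)] assms(3) no_spanning_path card_vertices by simp

lemma successively_segment [simp]:
  "1 \<le> a \<Longrightarrow> b \<le> Suc m \<Longrightarrow> successively E (map p [a..<b])"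
  by (rule successively_map_upt) (simp add: path_edge)

lemma successively_rev_segment [simp]:
  "1 \<le> a \<Longrightarrow> b \<le> Suc m \<Longrightarrow> successively E (rev (map p [a..<b]))"
  by (simp add: successively_rev_symmetric[OF edge_sym] del: successively_rev rev_map)

lemma q_not_on_path: "q \<notin> p ` {1..m}"
proof
  assume "q \<in> p ` {1..m}"
  then have "V = p ` {1..m}"
    using vertices by blast
  then show False
    using card_vertices card_image_le[of "{1..m}" p] by simp
qed

lemma neighbour_of_q_on_path:
  assumes "E q w"
  shows "\<exists>i\<in>{1..m}. w = p i"
  using assms vertices simple unfolding simple_graph_def by blast

lemma no_consecutive_neighbours_of_q:
  assumes "1 \<le> i" "i < m"
  shows "\<not> (E q (p i) \<and> E q (p (Suc i)))"
proof
  assume q: "E q (p i) \<and> E q (p (Suc i))"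
  let ?w = "map p [1..<Suc i] @ q # map p [Suc i..<Suc m]"
  have "successively E ?w"
    using assms q by (auto simp del: upt_Suc simp: successively_append_iff successively_Cons edge_sym)
  moreover have "set ?w = V"
    unfolding vertices using assms by (auto simp del: upt_Suc) force+
  moreover have "length ?w = Suc m"
    using assms by simp
  ultimately show False
    by (rule no_spanning_walk)
qed

lemma not_adjacent_q_first: "\<not> E q (p 1)"
proof
  assume q: "E q (p 1)"
  let ?w = "q # map p [1..<Suc m]"
  have "m \<noteq> 0"
    using q neighbour_of_q_on_path by fastforce
  then have "successively E ?w"
    using q by (auto simp del: upt_Suc simp: successively_Cons)
  moreover have "set ?w = V"
    unfolding vertices by (auto simp del: upt_Suc)
  ultimately show False
    by (intro no_spanning_walk) auto
qed

lemma not_adjacent_q_last: "\<not> E q (p m)"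
proof
  assume q: "E q (p m)"
  let ?w = "map p [1..<Suc m] @ [q]"
  have "m \<noteq> 0"
    using q neighbour_of_q_on_path by fastforce
  then have "successively E ?w"
    using q by (auto simp del: upt_Suc simp: successively_append_iff edge_sym)
  moreover have "set ?w = V"
    unfolding vertices by (auto simp del: upt_Suc)
  ultimately show False
    by (intro no_spanning_walk) auto
qed

lemma neighbour_of_q_interior:
  assumes "E q (p i)" "1 \<le> i" "i \<le> m"
  shows "2 \<le> i \<and> i < m"
proof -
  have "i \<noteq> 1" "i \<noteq> m"
    using assms(1) not_adjacent_q_first not_adjacent_q_last by auto
  with assms(2,3) show ?thesis
    by simp
qed

lemma not_adjacent_ends:
  assumes "E q (p i)" "1 \<le> i" "i \<le> m"
  shows "\<not> E (p 1) (p m)"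
proof
  assume e: "E (p 1) (p m)"
  have "2 \<le> i"
    using neighbour_of_q_interior[OF assms] by simp
  let ?w = "q # map p [i..<Suc m] @ map p [1..<i]"
  have "successively E ?w"
    using assms \<open>2 \<le> i\<close> e by (auto simp del: upt_Suc simp: successively_append_iff successively_Cons edge_sym)
  moreover have "set ?w = V"
    unfolding vertices using assms by (auto simp del: upt_Suc) force+
  moreover have "length ?w = Suc m"
    using assms by simp
  ultimately show False
    by (rule no_spanning_walk)
qed

lemma not_adjacent_first_succ:
  assumes "E q (p i)" "1 \<le> i" "i \<le> m"
  shows "\<not> E (p 1) (p (Suc i))"
proof
  assume e: "E (p 1) (p (Suc i))"
  have i: "2 \<le> i" "i < m"
    using neighbour_of_q_interior[OF assms] by auto
  let ?w = "q # rev (map p [1..<Suc i]) @ map p [Suc i..<Suc m]"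
  have "successively E ?w"
    using assms e i
    by (auto simp del: upt_Suc rev_map successively_rev
        simp: successively_append_iff successively_Cons edge_sym hd_rev last_rev)
  moreover have "set ?w = V"
    unfolding vertices using i by (auto simp del: upt_Suc) force+
  moreover have "length ?w = Suc m"
    using i by simp
  ultimately show False
    by (rule no_spanning_walk)
qed

lemma not_adjacent_last_pred:
  assumes "E q (p i)" "1 \<le> i" "i \<le> m"
  shows "\<not> E (p m) (p (i - 1))"
proof
  assume e: "E (p m) (p (i - 1))"
  have i: "2 \<le> i" "i < m"
    using neighbour_of_q_interior[OF assms] by auto
  let ?w = "q # map p [i..<Suc m] @ rev (map p [1..<i])"
  have "successively E ?w"
    using assms e i
    by (auto simp del: upt_Suc rev_map successively_rev
        simp: successively_append_iff successively_Cons edge_sym hd_rev last_rev)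
  moreover have "set ?w = V"
    unfolding vertices using i by (auto simp del: upt_Suc) force+
  moreover have "length ?w = Suc m"
    using i by simp
  ultimately show False
    by (rule no_spanning_walk)
qed

lemma not_adjacent_first_pred:
  assumes "E q (p j)" "E q (p i)" "1 \<le> j" "j < i" "i \<le> m"
  shows "\<not> E (p 1) (p (i - 1))"
proof
  assume e: "E (p 1) (p (i - 1))"
  have "Suc j \<noteq> i"
    using no_consecutive_neighbours_of_q[of j] assms by auto
  with assms have ji: "Suc j < i"
    by simp
  let ?w = "rev (map p [i..<Suc m]) @ q # rev (map p [1..<Suc j]) @ rev (map p [Suc j..<i])"
  have "successively E ?w"
    using assms e ji
    by (auto simp del: upt_Suc rev_map successively_rev
        simp: successively_append_iff successively_Cons edge_sym hd_rev last_rev)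
  moreover have "set ?w = V"
    unfolding vertices using assms by (auto simp del: upt_Suc) force+
  moreover have "length ?w = Suc m"
    using assms ji by simp
  ultimately show False
    by (rule no_spanning_walk)
qed

lemma not_adjacent_last_succ:
  assumes "E q (p i)" "E q (p j)" "1 \<le> i" "i < j" "j \<le> m"
  shows "\<not> E (p m) (p (Suc i))"
proof
  assume e: "E (p m) (p (Suc i))"
  have "Suc i \<noteq> j"
    using no_consecutive_neighbours_of_q[of i] assms by auto
  with assms have ij: "Suc i < j"
    by simp
  let ?w = "map p [1..<Suc i] @ q # map p [j..<Suc m] @ map p [Suc i..<j]"
  have "successively E ?w"
    using assms e ij by (auto simp del: upt_Suc simp: successively_append_iff successively_Cons edge_sym)
  moreover have "set ?w = V"
    unfolding vertices using assms by (auto simp del: upt_Suc) force+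
  moreover have "length ?w = Suc m"
    using assms ij by simp
  ultimately show False
    by (rule no_spanning_walk)
qed

end

theorem mainTheorem11:
  fixes V :: "'a set" and E :: "'a \<Rightarrow> 'a \<Rightarrow> bool" and p :: "nat \<Rightarrow> 'a" and q :: 'a
    and n :: nat
  assumes "simple_graph V E" and "connected_graph V E" and "n \<ge> 4"
    and "V = p ` {1..n-1} \<union> {q}" and "card V = n"
    and "\<forall>i. 1 \<le> i \<and> i < n - 1 \<longrightarrow> E (p i) (p (i+1))"
    and "psi V E (n-1) = 2" and "psi V E n = 0"
  shows "(degree V E (p 1) \<ge> 2 \<and> degree V E (p (n-1)) \<ge> 2) \<and>
    (\<not> E (p 1) (p (n-1)) \<and> \<not> E q (p 1) \<and> \<not> E q (p (n-1)) \<and>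
         (\<forall>i\<in>{2..n-2}. E q (p i) \<longrightarrow> \<not> E q (p (i+1)))) \<and>
    (\<forall>i\<in>{1..n-1}. E q (p i) \<longrightarrow> \<not> E (p 1) (p (i+1)) \<and> \<not> E (p (n-1)) (p (i-1))) \<and>
    ((\<forall>i\<in>{1..n-1}. E q (p i) \<and> i > Min {j\<in>{1..n-1}. E q (p j)}
            \<longrightarrow> \<not> E (p 1) (p (i-1))) \<and>
         (\<forall>i\<in>{1..n-1}. E q (p i) \<and> i < Max {j\<in>{1..n-1}. E q (p j)}
            \<longrightarrow> \<not> E (p (n-1)) (p (i+1))))"
proof -
  obtain m where n: "n = Suc m" and m: "3 \<le> m"
    using assms(3) by (cases n) auto
  have fin: "finite V"
    using assms(1) by (simp add: simple_graph_def)
  interpret nontraceable_path_plus_vertex V E p q m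
    using assms(1,4-6) psi_eq_0_imp_no_path[OF fin _ assms(8)] n by unfold_locales auto
  have degree_ge_2: "2 \<le> degree V E v" if "E v w" for v w
    using degree_ge_2_if_avoiding_paths[OF assms(1), of m] psi_ge_2_imp_avoiding_path[OF fin]
      assms(5,7) n m that by auto
  have "E (p 1) (p 2)" "E (p m) (p (m - 1))"
    using path_edge[of 1] edge_sym[OF path_edge[of "m - 1"]] m by (simp_all add: numeral_2_eq_2)
  then have "2 \<le> degree V E (p 1)" "2 \<le> degree V E (p m)"
    by (simp_all add: degree_ge_2)
  obtain i0 where i0: "i0 \<in> {1..m}" "E q (p i0)"
    using connected_graph_has_neighbour[OF assms(2), of q "p 1"] q_not_on_path m vertices
      neighbour_of_q_on_path by fastforce
  define N where "N = {j\<in>{1..m}. E q (p j)}"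
  have "finite N" "N \<noteq> {}"
    using i0 by (auto simp: N_def)
  then have N: "Min N \<in> N" "Max N \<in> N"
    by (simp_all add: Min_in Max_in)
  show ?thesis
    unfolding n diff_Suc_1 N_def[symmetric]
    using \<open>2 \<le> degree V E (p 1)\<close> \<open>2 \<le> degree V E (p m)\<close>
      not_adjacent_ends[OF i0(2)] i0(1) not_adjacent_q_first not_adjacent_q_last
      no_consecutive_neighbours_of_q not_adjacent_first_succ not_adjacent_last_pred
      not_adjacent_first_pred[of "Min N"] not_adjacent_last_succ[of _ "Max N"] N
    by (auto simp: N_def)
qed

end
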